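(* Let $\Bbbk$ be an algebraically closed field of characteristic zero and let $\mathcal{V}$ be the Virasoro algebra over $\Bbbk$. Let $M$ be a simple weight $\mathcal{V}$-module and let $\mu\in\Bbbk$ be such that $\dim M_\mu<\infty$ and $\dim M_{\mu+i}=\infty$ for every $i\in\mathbb{Z}\setminus\{0\}$. Let $0\neq v\in M_{\mu-1}$ be such that $e_1v=0$. Then $(e_1^3-6e_2e_1+6e_3)e_2v=0$.
   Context: The Virasoro algebra $\mathcal{V}$ over $\Bbbk$ has basis consisting of a central element $c$ and elements $e_i$, $i\in\mathbb{Z}$, with bracket $[e_i,e_j]=(j-i)e_{i+j}+\delta_{i,-j}\frac{i^3-i}{12}c$. A weight $\mathcal{V}$-module is a module on which $e_0$ and $c$ act diagonalizably; $M_\lambda=\{m\in M: e_0m=\lambda m\}$. *)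

theory Defs
  imports "HOL-Computational_Algebra.Polynomial"
begin

definition alg_closed_field :: "'k::field itself \<Rightarrow> bool" where
  "alg_closed_field _ \<longleftrightarrow> (\<forall>p::'k poly. degree p \<noteq> 0 \<longrightarrow> (\<exists>x. poly p x = 0))"

text \<open>A representation of the Virasoro algebra on the k-vector space 'm (scalar
  multiplication sc): E i is the action of e_i, C the action of the central element c.\<close>
definition vir_module ::
  "('k::field_char_0 \<Rightarrow> 'm::ab_group_add \<Rightarrow> 'm) \<Rightarrow> (int \<Rightarrow> 'm \<Rightarrow> 'm) \<Rightarrow> ('m \<Rightarrow> 'm) \<Rightarrow> bool" where
  "vir_module sc E C \<longleftrightarrow>
     vector_space sc \<and>
     (\<forall>i. Vector_Spaces.linear sc sc (E i)) \<and> Vector_Spaces.linear sc sc C \<and>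
     (\<forall>i j m. E i (E j m) - E j (E i m) =
        sc (of_int (j - i)) (E (i + j) m) +
        (if i = - j then sc (of_int (i ^ 3 - i) / 12) (C m) else 0)) \<and>
     (\<forall>i m. C (E i m) = E i (C m))"

definition weight_space ::
  "('k::field_char_0 \<Rightarrow> 'm::ab_group_add \<Rightarrow> 'm) \<Rightarrow> (int \<Rightarrow> 'm \<Rightarrow> 'm) \<Rightarrow> 'k \<Rightarrow> 'm set" where
  "weight_space sc E l = {m. E 0 m = sc l m}"

definition weight_vir_module ::
  "('k::field_char_0 \<Rightarrow> 'm::ab_group_add \<Rightarrow> 'm) \<Rightarrow> (int \<Rightarrow> 'm \<Rightarrow> 'm) \<Rightarrow> ('m \<Rightarrow> 'm) \<Rightarrow> bool" where
  "weight_vir_module sc E C \<longleftrightarrow> vir_module sc E C \<and>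
     module.span sc (\<Union>a. weight_space sc E a) = UNIV \<and>
     module.span sc (\<Union>a. {m. C m = sc a m}) = UNIV"

definition vir_submodule ::
  "('k::field_char_0 \<Rightarrow> 'm::ab_group_add \<Rightarrow> 'm) \<Rightarrow> (int \<Rightarrow> 'm \<Rightarrow> 'm) \<Rightarrow> ('m \<Rightarrow> 'm) \<Rightarrow> 'm set \<Rightarrow> bool" where
  "vir_submodule sc E C N \<longleftrightarrow> module.subspace sc N \<and>
     (\<forall>i. \<forall>m\<in>N. E i m \<in> N) \<and> (\<forall>m\<in>N. C m \<in> N)"

definition simple_vir_module ::
  "('k::field_char_0 \<Rightarrow> 'm::ab_group_add \<Rightarrow> 'm) \<Rightarrow> (int \<Rightarrow> 'm \<Rightarrow> 'm) \<Rightarrow> ('m \<Rightarrow> 'm) \<Rightarrow> bool" where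
  "simple_vir_module sc E C \<longleftrightarrow> vir_module sc E C \<and> (UNIV :: 'm set) \<noteq> {0} \<and>
     (\<forall>N. vir_submodule sc E C N \<longrightarrow> N = {0} \<or> N = UNIV)"

definition fin_dim_subspace :: "('k::field \<Rightarrow> 'm::ab_group_add \<Rightarrow> 'm) \<Rightarrow> 'm set \<Rightarrow> bool" where
  "fin_dim_subspace sc S \<longleftrightarrow> (\<exists>B. finite B \<and> B \<subseteq> S \<and> module.span sc B = S)"

end

theory Submission
  imports Defs
begin

text \<open>Only the bracket relations and \<open>e\<^sub>1 v = 0\<close> are needed: then
  \<open>e\<^sub>1 e\<^sub>j v = [e\<^sub>1, e\<^sub>j] v = (j - 1) e\<^sub>j\<^sub>+\<^sub>1 v\<close>, so
  \<open>e\<^sub>1\<^sup>3 e\<^sub>2 v = 6 e\<^sub>5 v\<close> and \<open>e\<^sub>2 e\<^sub>1 e\<^sub>2 v = e\<^sub>2 e\<^sub>3 v\<close>, and the expression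
  collapses to \<open>6 (e\<^sub>5 - [e\<^sub>2, e\<^sub>3]) v = 0\<close>.\<close>

lemma vir_module_bracket:
  assumes "vir_module sc E C"
  shows "E i (E j m) - E j (E i m) =
           sc (of_int (j - i)) (E (i + j) m) +
           (if i = - j then sc (of_int (i ^ 3 - i) / 12) (C m) else 0)"
  using assms unfolding vir_module_def by blast

lemma vir_module_E_linear:
  assumes "vir_module sc E C"
  shows "E i 0 = 0" and "E i (sc a x) = sc a (E i x)"
  using assms unfolding vir_module_def Vector_Spaces.linear_def
  by (metis module_hom.zero, metis module_hom.scale)

lemma vir_module_E1_E_of_E1_zero:
  assumes "vir_module sc E C" and "E 1 v = 0" and "j \<noteq> -1"
  shows "E 1 (E j v) = sc (of_int (j - 1)) (E (j + 1) v)"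
  using vir_module_bracket[OF assms(1), of 1 j v] assms(2,3)
  by (simp add: vir_module_E_linear(1)[OF assms(1)] add.commute)

lemma vir_module_singular_vector_relation:
  assumes vir: "vir_module sc E C" and v: "E 1 v = 0"
  shows "E 1 (E 1 (E 1 (E 2 v))) - sc 6 (E 2 (E 1 (E 2 v))) + sc 6 (E 3 (E 2 v)) = 0"
proof -
  interpret vector_space sc
    using vir unfolding vir_module_def by blast
  have E12: "E 1 (E 2 v) = E 3 v"
    using vir_module_E1_E_of_E1_zero[OF vir v, of 2] by simp
  have E13: "E 1 (E 3 v) = sc 2 (E 4 v)"
    using vir_module_E1_E_of_E1_zero[OF vir v, of 3] by simp
  have E14: "E 1 (E 4 v) = sc 3 (E 5 v)"
    using vir_module_E1_E_of_E1_zero[OF vir v, of 4] by simp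
  have "E 1 (E 1 (E 3 v)) = sc 2 (sc 3 (E 5 v))"
    by (simp only: E13 E14 vir_module_E_linear(2)[OF vir])
  also have "\<dots> = sc 6 (E 5 v)"
    by simp
  finally have E113: "E 1 (E 1 (E 3 v)) = sc 6 (E 5 v)" .
  have E23: "E 2 (E 3 v) - E 3 (E 2 v) = E 5 v"
    using vir_module_bracket[OF vir, of 2 3 v] by simp
  have "E 1 (E 1 (E 1 (E 2 v))) - sc 6 (E 2 (E 1 (E 2 v))) + sc 6 (E 3 (E 2 v))
      = sc 6 (E 5 v - (E 2 (E 3 v) - E 3 (E 2 v)))"
    unfolding E12 E113 by (simp add: scale_right_diff_distrib)
  also have "\<dots> = 0"
    by (simp add: E23)
  finally show ?thesis .
qed

theorem lemma2:
  fixes sc :: "'k::field_char_0 \<Rightarrow> 'm::ab_group_add \<Rightarrow> 'm"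
    and E :: "int \<Rightarrow> 'm \<Rightarrow> 'm" and C :: "'m \<Rightarrow> 'm"
    and \<mu> :: 'k and v :: 'm
  assumes "alg_closed_field TYPE('k)"
    and "weight_vir_module sc E C"
    and "simple_vir_module sc E C"
    and "fin_dim_subspace sc (weight_space sc E \<mu>)"
    and "\<forall>i::int. i \<noteq> 0 \<longrightarrow> \<not> fin_dim_subspace sc (weight_space sc E (\<mu> + of_int i))"
    and "v \<noteq> 0" and "v \<in> weight_space sc E (\<mu> - 1)" and "E 1 v = 0"
  shows "E 1 (E 1 (E 1 (E 2 v))) - sc 6 (E 2 (E 1 (E 2 v))) + sc 6 (E 3 (E 2 v)) = 0"
  using vir_module_singular_vector_relation assms(3,8)
  unfolding simple_vir_module_def by blast

end
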